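(* There is a universal constant $C$ such that the following holds. Let $u$ be a continuous function on $[0,1]\times[-1,1]^3$ which is $C^1$ in $t$ and $C^2$ in $x$ on $(0,1]\times(-1,1)^3$, and suppose that pointwise on $(0,1]\times(-1,1)^3$ $$(\partial_t-\Delta)u=-u^3+g(u,z),$$ where $g$ is a bounded function with $\|g\|:=\sup|g|$. Then for all $(t,x)\in(0,1]\times(-1,1)^3$, $x=(x_1,x_2,x_3)$, $$|u(t,x)|\le C\max\Big\{\frac{1}{\min\{\sqrt t,\,1-x_i,\,1+x_i,\ i=1,2,3\}},\ \|g\|^{1/3}\Big\}.$$ *)

theory Defs
  imports "HOL-Analysis.Analysis"
begin

definition open_cube :: "(real^3) set" where
  "open_cube = {x. \<forall>i. -1 < x$i \<and> x$i < 1}"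

definition closed_cube :: "(real^3) set" where
  "closed_cube = {x. \<forall>i. -1 \<le> x$i \<and> x$i \<le> 1}"

definition par_dom :: "(real \<times> (real^3)) set" where
  "par_dom = {0<..1} \<times> open_cube"

definition is_sol ::
  "(real \<Rightarrow> real^3 \<Rightarrow> real) \<Rightarrow> (real \<Rightarrow> real^3 \<Rightarrow> real) \<Rightarrow>
   (real \<Rightarrow> real^3 \<Rightarrow> real^3) \<Rightarrow> (real \<Rightarrow> real^3 \<Rightarrow> real^3^3) \<Rightarrow>
   (real \<Rightarrow> real \<Rightarrow> real^3 \<Rightarrow> real) \<Rightarrow> bool" where
  "is_sol u ut Du D2u g \<longleftrightarrow>
     continuous_on ({0..1} \<times> closed_cube) (\<lambda>(t,x). u t x) \<and>
     continuous_on par_dom (\<lambda>(t,x). ut t x) \<and>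
     continuous_on par_dom (\<lambda>(t,x). Du t x) \<and>
     continuous_on par_dom (\<lambda>(t,x). D2u t x) \<and>
     (\<forall>(t,x)\<in>par_dom.
        ((\<lambda>s. u s x) has_real_derivative ut t x) (at t within {0<..1}) \<and>
        ((\<lambda>y. u t y) has_derivative (\<lambda>h. Du t x \<bullet> h)) (at x) \<and>
        ((\<lambda>y. Du t y) has_derivative (\<lambda>h. D2u t x *v h)) (at x) \<and>
        ut t x - (\<Sum>i\<in>UNIV. D2u t x $ i $ i) = - ((u t x) ^ 3) + g (u t x) t x)"

definition gnorm :: "(real \<Rightarrow> real \<Rightarrow> real^3 \<Rightarrow> real) \<Rightarrow> real" where
  "gnorm g = (SUP p. \<bar>g (fst p) (fst (snd p)) (snd (snd p))\<bar>)"

definition g_bounded :: "(real \<Rightarrow> real \<Rightarrow> real^3 \<Rightarrow> real) \<Rightarrow> bool" where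
  "g_bounded g \<longleftrightarrow> (\<exists>M. \<forall>a t x. \<bar>g a t x\<bar> \<le> M)"

definition pdist :: "real \<Rightarrow> real^3 \<Rightarrow> real" where
  "pdist t x = Min (insert (sqrt t) ((\<lambda>i. 1 - x$i) ` UNIV \<union> (\<lambda>i. 1 + x$i) ` UNIV))"

end

theory Submission
  imports Defs
begin

text \<open>
  Compare u with the barrier v(t, x) = 2 / sqrt t + sum_j (2 / (1 - x_j) + 2 / (1 + x_j)) + b,
  where b = gnorm g powr (1/3). It blows up on the parabolic boundary and is a supersolution,
  v_t - Laplacian v \<ge> - v^3 + b^3: each of its three terms pays for one term of the equation.
  If u - v were positive somewhere, it would attain a positive maximum at an interior point,
  where d_t (u - v) \<ge> 0 and every d_ii (u - v) \<le> 0; the equations then force u^3 \<le> v^3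
  there, a contradiction. The same applies to -u, and v \<le> 15 max (1 / pdist t x) b.
\<close>

lemma par_dom_iff: "(t, x) \<in> par_dom \<longleftrightarrow> 0 < t \<and> t \<le> 1 \<and> (\<forall>j. -1 < x$j \<and> x$j < 1)"
  by (auto simp: par_dom_def open_cube_def)

text \<open>The maximum in time may sit at the final time, so only left difference quotients are available.\<close>

lemma has_real_derivative_nonneg_at_right_max:
  fixes f :: "real \<Rightarrow> real"
  assumes deriv: "(f has_real_derivative D) (at t within {a<..b})"
    and t: "a < t" "t \<le> b"
    and max: "\<And>s. s \<in> {a<..b} \<Longrightarrow> f s \<le> f t"
  shows "0 \<le> D"
proof (rule ccontr)
  assume "\<not> 0 \<le> D"
  then obtain d where "d > 0" and dec: "\<forall>h>0. t - h \<in> {a<..b} \<longrightarrow> h < d \<longrightarrow> f t < f (t - h)"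
    using has_real_derivative_neg_dec_left[OF deriv] by force
  define h where "h = min d (t - a) / 2"
  have "h > 0" "h < d" "t - h \<in> {a<..b}"
    using \<open>d > 0\<close> t by (auto simp: h_def min_def field_simps)
  with dec max show False by force
qed

lemma second_derivative_nonpos_at_local_max:
  fixes \<phi> \<phi>' :: "real \<Rightarrow> real"
  assumes r: "r > 0"
    and deriv: "\<And>s. \<bar>s\<bar> < r \<Longrightarrow> (\<phi> has_real_derivative \<phi>' s) (at s)"
    and deriv2: "(\<phi>' has_real_derivative D) (at 0)"
    and max: "\<And>s. \<bar>s\<bar> < r \<Longrightarrow> \<phi> s \<le> \<phi> 0"
  shows "D \<le> 0"
proof (rule ccontr)
  assume "\<not> D \<le> 0"
  then have "D > 0" by simp
  have "\<phi>' 0 = 0"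
    by (rule DERIV_local_max[OF deriv[of 0] r]) (use r max in auto)
  moreover obtain d where "d > 0" and inc: "\<forall>h>0. h < d \<longrightarrow> \<phi>' 0 < \<phi>' (0 + h)"
    using DERIV_pos_inc_right[OF deriv2 \<open>D > 0\<close>] by blast
  define s where "s = min d r / 2"
  have s: "0 < s" "s < d" "s < r"
    using \<open>d > 0\<close> r by (auto simp: s_def)
  have "\<phi> 0 < \<phi> s"
  proof (rule DERIV_pos_imp_increasing_open[OF s(1)])
    fix y assume "0 < y" "y < s"
    with s inc \<open>\<phi>' 0 = 0\<close> deriv[of y] show "\<exists>z. DERIV \<phi> y :> z \<and> z > 0"
      by force
  next
    have "\<forall>y\<in>{0..s}. isCont \<phi> y"
      using s by (auto intro!: DERIV_isCont deriv)
    then show "continuous_on {0..s} \<phi>"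
      by (rule continuous_at_imp_continuous_on)
  qed
  with max[of s] s show False by simp
qed

lemma has_real_derivative_along_axis:
  fixes f :: "real^'n \<Rightarrow> real"
  assumes "(f has_derivative (\<lambda>h. Df \<bullet> h)) (at (x + s *\<^sub>R axis i 1))"
  shows "((\<lambda>s. f (x + s *\<^sub>R axis i 1)) has_real_derivative Df $ i) (at s)"
proof -
  have "((\<lambda>s. x + s *\<^sub>R axis i 1) has_derivative (\<lambda>h. h *\<^sub>R axis i 1)) (at s)"
    by (rule derivative_eq_intros refl)+ simp
  from has_derivative_compose[OF this assms] show ?thesis
    unfolding has_field_derivative_def
    by (rule has_derivative_eq_rhs) (auto simp: inner_axis mult.commute)
qed

lemma has_real_derivative_component_along_axis:
  fixes F :: "real^'n \<Rightarrow> real^'n"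
  assumes "(F has_derivative (\<lambda>h. H *v h)) (at (x + s *\<^sub>R axis i 1))"
  shows "((\<lambda>s. F (x + s *\<^sub>R axis i 1) $ j) has_real_derivative H $ j $ i) (at s)"
proof -
  have "((\<lambda>s. x + s *\<^sub>R axis i 1) has_derivative (\<lambda>h. h *\<^sub>R axis i 1)) (at s)"
    by (rule derivative_eq_intros refl)+ simp
  from has_derivative_compose[OF this assms]
  have "((\<lambda>s. F (x + s *\<^sub>R axis i 1) \<bullet> axis j 1) has_derivative
         (\<lambda>h. (H *v (h *\<^sub>R axis i 1)) \<bullet> axis j 1)) (at s)"
    by (rule has_derivative_inner_left)
  then show ?thesis
    by (simp add: has_field_derivative_def inner_axis matrix_vector_mul_component
        inner_axis' mult_commute_abs)
qed

lemma power3_add_le: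
  fixes a c :: real
  assumes "0 \<le> a" "0 \<le> c"
  shows "a ^ 3 + c ^ 3 \<le> (a + c) ^ 3"
  using assms by (simp add: power3_eq_cube algebra_simps)

lemma sum_power3_le_power3_sum:
  fixes f :: "'a \<Rightarrow> real"
  assumes "finite A" "\<And>i. i \<in> A \<Longrightarrow> 0 \<le> f i"
  shows "(\<Sum>i\<in>A. f i ^ 3) \<le> (\<Sum>i\<in>A. f i) ^ 3"
  using assms
proof (induction A rule: finite_induct)
  case (insert a A)
  then have "f a ^ 3 + (\<Sum>i\<in>A. f i) ^ 3 \<le> (f a + (\<Sum>i\<in>A. f i)) ^ 3"
    by (intro power3_add_le sum_nonneg) auto
  with insert show ?case by simp
qed simp

definition wall :: "real \<Rightarrow> real" where
  "wall y = 2 / (1 - y) + 2 / (1 + y)"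

definition wall' :: "real \<Rightarrow> real" where
  "wall' y = 2 / (1 - y)^2 - 2 / (1 + y)^2"

definition wall'' :: "real \<Rightarrow> real" where
  "wall'' y = 4 / (1 - y)^3 + 4 / (1 + y)^3"

lemma has_real_derivative_wall: "-1 < y \<Longrightarrow> y < 1 \<Longrightarrow> (wall has_real_derivative wall' y) (at y)"
  unfolding wall_def wall'_def
  by (rule derivative_eq_intros refl | simp)+ (simp add: field_simps power2_eq_square)

lemma has_real_derivative_wall': "-1 < y \<Longrightarrow> y < 1 \<Longrightarrow> (wall' has_real_derivative wall'' y) (at y)"
  unfolding wall'_def wall''_def
  by (rule derivative_eq_intros refl | simp)+
    (simp add: divide_simps, simp add: algebra_simps power2_eq_square power3_eq_cube power4_eq_xxxx)

lemma wall_ge: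
  assumes "-1 < y" "y < 1"
  shows "2 / (1 - y) \<le> wall y" "2 / (1 + y) \<le> wall y" "0 < wall y"
  using assms unfolding wall_def by (simp_all add: add_pos_pos)

lemma wall''_le_power3_wall:
  assumes "-1 < y" "y < 1"
  shows "wall'' y \<le> wall y ^ 3"
proof -
  have "wall'' y \<le> (2 / (1 - y)) ^ 3 + (2 / (1 + y)) ^ 3"
    using assms by (simp add: wall''_def power_divide divide_right_mono add_mono)
  also have "\<dots> \<le> wall y ^ 3"
    unfolding wall_def using assms by (intro power3_add_le) auto
  finally show ?thesis .
qed

definition barrier :: "real \<Rightarrow> real \<Rightarrow> real^3 \<Rightarrow> real" where
  "barrier b t x = 2 / sqrt t + (\<Sum>j\<in>UNIV. wall (x$j)) + b"

lemma barrier_ge: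
  assumes "(t, x) \<in> par_dom" "0 \<le> b"
  shows "2 / sqrt t \<le> barrier b t x" "2 / (1 - x$j) \<le> barrier b t x"
    "2 / (1 + x$j) \<le> barrier b t x" "0 < barrier b t x"
proof -
  have x: "-1 < x$k" "x$k < 1" for k
    using assms(1) by (auto simp: par_dom_iff)
  have "wall (x$j) \<le> (\<Sum>k\<in>UNIV. wall (x$k))" "0 \<le> (\<Sum>k\<in>UNIV. wall (x$k))"
    using wall_ge(3)[OF x] by (auto intro!: member_le_sum sum_nonneg simp: less_imp_le)
  moreover have "0 < 2 / sqrt t"
    using assms(1) by (simp add: par_dom_iff)
  ultimately show "2 / sqrt t \<le> barrier b t x" "2 / (1 - x$j) \<le> barrier b t x"
    "2 / (1 + x$j) \<le> barrier b t x" "0 < barrier b t x"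
    using wall_ge(1,2)[OF x, of j] assms(2) unfolding barrier_def by linarith+
qed

lemma barrier_supersolution:
  assumes "(t, x) \<in> par_dom" "0 \<le> b"
  shows "1 / (t * sqrt t) + (\<Sum>j\<in>UNIV. wall'' (x$j)) + b ^ 3 \<le> barrier b t x ^ 3"
proof -
  have t: "0 < t" and x: "-1 < x$j" "x$j < 1" for j
    using assms(1) by (auto simp: par_dom_iff)
  define W where "W = (\<Sum>j\<in>UNIV. wall (x$j))"
  have wall_nonneg: "0 \<le> wall (x$j)" for j
    using wall_ge(3)[OF x] by (simp add: less_imp_le)
  have "1 / (t * sqrt t) \<le> (2 / sqrt t) ^ 3"
    using t by (simp add: power3_eq_cube power_divide divide_right_mono)
  moreover have "(\<Sum>j\<in>UNIV. wall'' (x$j)) \<le> W ^ 3"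
  proof -
    have "(\<Sum>j\<in>UNIV. wall'' (x$j)) \<le> (\<Sum>j\<in>UNIV. wall (x$j) ^ 3)"
      by (intro sum_mono wall''_le_power3_wall x)
    also have "\<dots> \<le> W ^ 3"
      unfolding W_def by (intro sum_power3_le_power3_sum wall_nonneg) simp
    finally show ?thesis .
  qed
  moreover have "(2 / sqrt t) ^ 3 + W ^ 3 + b ^ 3 \<le> barrier b t x ^ 3"
  proof -
    have "0 \<le> W"
      unfolding W_def by (intro sum_nonneg wall_nonneg)
    then have "(2 / sqrt t) ^ 3 + (W ^ 3 + b ^ 3) \<le> (2 / sqrt t) ^ 3 + (W + b) ^ 3"
      using assms(2) power3_add_le by simp
    also have "\<dots> \<le> (2 / sqrt t + (W + b)) ^ 3"
      using t \<open>0 \<le> W\<close> assms(2) by (intro power3_add_le) auto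
    finally show ?thesis
      by (simp add: barrier_def W_def add.assoc)
  qed
  ultimately show ?thesis by linarith
qed

lemma barrier_ge_off_compact:
  assumes "M > 0" "0 \<le> b" "\<delta> \<le> 4 / M^2" "\<delta> \<le> 2 / M"
    and "(t, x) \<in> par_dom" "(t, x) \<notin> {\<delta>..1} \<times> cbox (vec (\<delta> - 1)) (vec (1 - \<delta>))"
  shows "M \<le> barrier b t x"
proof -
  have t: "0 < t" "t \<le> 1" and x: "-1 < x$j" "x$j < 1" for j
    using assms(5) by (auto simp: par_dom_iff)
  consider "t < \<delta>" | j where "x$j < \<delta> - 1" | j where "1 - \<delta> < x$j"
    using assms(6) t unfolding mem_Times_iff mem_box_cart by (auto simp: not_le)
  then show ?thesis
  proof cases
    case 1
    then have "sqrt t \<le> sqrt (4 / M^2)"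
      using assms(3) by simp
    also have "\<dots> = 2 / M"
      using assms(1) by (simp add: real_sqrt_divide)
    finally have "M \<le> 2 / sqrt t"
      using assms(1) t by (simp add: field_simps)
    then show ?thesis
      using barrier_ge(1)[OF assms(5,2)] by linarith
  next
    case (2 j)
    then have "1 + x$j \<le> 2 / M"
      using assms(4) by linarith
    then have "M \<le> 2 / (1 + x$j)"
      using assms(1) x[of j] by (simp add: field_simps)
    then show ?thesis
      using barrier_ge(3)[OF assms(5,2)] by (meson order_trans)
  next
    case (3 j)
    then have "1 - x$j \<le> 2 / M"
      using assms(4) by linarith
    then have "M \<le> 2 / (1 - x$j)"
      using assms(1) x[of j] by (simp add: field_simps)
    then show ?thesis
      using barrier_ge(2)[OF assms(5,2)] by (meson order_trans)
  qed
qed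

lemma continuous_on_barrier: "continuous_on par_dom (\<lambda>p. barrier b (fst p) (snd p))"
proof -
  have pos: "0 < fst p \<and> -1 < snd p $ j \<and> snd p $ j < 1" if "p \<in> par_dom" for p j
    using that by (auto simp: par_dom_def open_cube_def)
  have "sqrt (fst p) \<noteq> 0 \<and> 1 - snd p $ j \<noteq> 0 \<and> 1 + snd p $ j \<noteq> 0" if "p \<in> par_dom" for p j
    using pos[OF that, of j] by auto
  then show ?thesis
    unfolding barrier_def wall_def by (intro continuous_intros) auto
qed

lemma has_real_derivative_two_div_sqrt:
  "0 < t \<Longrightarrow> ((\<lambda>s. 2 / sqrt s) has_real_derivative - 1 / (t * sqrt t)) (at t)"
  by (rule derivative_eq_intros refl | simp)+ (simp add: field_simps)

lemma time_derivative_ge_at_max: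
  assumes "(t0, x0) \<in> par_dom"
    and deriv: "((\<lambda>s. u s x0) has_real_derivative ut) (at t0 within {0<..1})"
    and max: "\<And>t. (t, x0) \<in> par_dom \<Longrightarrow> u t x0 - barrier b t x0 \<le> u t0 x0 - barrier b t0 x0"
  shows "- 1 / (t0 * sqrt t0) \<le> ut"
proof -
  have t0: "0 < t0" "t0 \<le> 1"
    using assms(1) by (auto simp: par_dom_iff)
  have deriv': "((\<lambda>s. u s x0 - 2 / sqrt s) has_real_derivative ut - (- 1 / (t0 * sqrt t0)))
      (at t0 within {0<..1})"
    using deriv has_field_derivative_at_within[OF has_real_derivative_two_div_sqrt[OF t0(1)]]
    by (rule DERIV_diff)
  have max': "u s x0 - 2 / sqrt s \<le> u t0 x0 - 2 / sqrt t0" if "s \<in> {0<..1}" for s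
    using max[of s] that assms(1) by (simp add: par_dom_iff barrier_def)
  have "0 \<le> ut - (- 1 / (t0 * sqrt t0))"
    using deriv' t0 max' by (rule has_real_derivative_nonneg_at_right_max)
  then show ?thesis by simp
qed

lemma sum_along_axis:
  fixes \<phi> :: "real \<Rightarrow> 'a::ab_group_add" and x :: "real^'n"
  shows "(\<Sum>j\<in>UNIV. \<phi> ((x + s *\<^sub>R axis i 1) $ j)) = (\<Sum>j\<in>UNIV. \<phi> (x$j)) - \<phi> (x$i) + \<phi> (x$i + s)"
proof -
  have "(\<Sum>j\<in>UNIV. \<phi> ((x + s *\<^sub>R axis i 1) $ j)) - (\<Sum>j\<in>UNIV. \<phi> (x$j))
      = (\<Sum>j\<in>UNIV. if j = i then \<phi> (x$i + s) - \<phi> (x$i) else 0)"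
    unfolding sum_subtractf[symmetric] by (intro sum.cong) (auto simp: axis_def)
  then show ?thesis by (simp add: algebra_simps)
qed

lemma hessian_diag_le_wall''_at_max:
  fixes f :: "real^3 \<Rightarrow> real" and Df :: "real^3 \<Rightarrow> real^3"
  assumes "x0 \<in> open_cube"
    and grad: "\<And>y. y \<in> open_cube \<Longrightarrow> (f has_derivative (\<lambda>h. Df y \<bullet> h)) (at y)"
    and hess: "(Df has_derivative (\<lambda>h. H *v h)) (at x0)"
    and max: "\<And>y. y \<in> open_cube \<Longrightarrow>
      f y - (\<Sum>j\<in>UNIV. wall (y$j)) \<le> f x0 - (\<Sum>j\<in>UNIV. wall (x0$j))"
  shows "H $ i $ i \<le> wall'' (x0$i)"
proof -
  let ?y = "\<lambda>s. x0 + s *\<^sub>R axis i 1"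
  define r where "r = min (1 - x0$i) (1 + x0$i)"
  have x0: "-1 < x0$j" "x0$j < 1" for j
    using assms(1) by (auto simp: open_cube_def)
  have "r > 0"
    using x0[of i] by (simp add: r_def)
  have on_line: "-1 < x0$i + s" "x0$i + s < 1" "?y s \<in> open_cube" if "\<bar>s\<bar> < r" for s
    using that x0 by (auto simp: r_def open_cube_def axis_def)
  have shift: "((\<lambda>s. x0$i + s) has_real_derivative 1) (at s)" for s
    by (rule derivative_eq_intros refl | simp)+
  have "((\<lambda>s. f (?y s) - wall (x0$i + s)) has_real_derivative Df (?y s) $ i - wall' (x0$i + s)) (at s)"
    if "\<bar>s\<bar> < r" for s
  proof (rule DERIV_diff)
    show "((\<lambda>s. f (?y s)) has_real_derivative Df (?y s) $ i) (at s)"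
      by (rule has_real_derivative_along_axis[OF grad[OF on_line(3)[OF that]]])
    show "((\<lambda>s. wall (x0$i + s)) has_real_derivative wall' (x0$i + s)) (at s)"
      using DERIV_chain2[OF has_real_derivative_wall[OF on_line(1,2)[OF that]] shift] by simp
  qed
  moreover have "((\<lambda>s. Df (?y s) $ i - wall' (x0$i + s)) has_real_derivative H $ i $ i - wall'' (x0$i)) (at 0)"
  proof (rule DERIV_diff)
    show "((\<lambda>s. Df (?y s) $ i) has_real_derivative H $ i $ i) (at 0)"
      by (rule has_real_derivative_component_along_axis) (simp add: hess)
    show "((\<lambda>s. wall' (x0$i + s)) has_real_derivative wall'' (x0$i)) (at 0)"
    proof -
      have "-1 < x0$i + 0" "x0$i + 0 < 1"
        using x0[of i] by simp_all
      from DERIV_chain2[OF has_real_derivative_wall'[OF this] shift] show ?thesis by simp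
    qed
  qed
  moreover have "f (?y s) - wall (x0$i + s) \<le> f (?y 0) - wall (x0$i + 0)" if "\<bar>s\<bar> < r" for s
    using max[OF on_line(3)[OF that]] unfolding sum_along_axis by simp
  ultimately have "H $ i $ i - wall'' (x0$i) \<le> 0"
    by (rule second_derivative_nonpos_at_local_max[OF \<open>r > 0\<close>])
  then show ?thesis by simp
qed

lemma par_dom_subset_closed: "par_dom \<subseteq> {0..1} \<times> closed_cube"
  by (auto simp: par_dom_def open_cube_def closed_cube_def less_imp_le)

lemma compact_closed_cube: "compact closed_cube"
proof -
  have "closed_cube = cbox (vec (-1)) (vec 1)"
    by (auto simp: closed_cube_def mem_box_cart)
  then show ?thesis
    by (metis compact_cbox)
qed

lemma inner_box_subset_par_dom:
  assumes "0 < \<delta>"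
  shows "{\<delta>..1} \<times> cbox (vec (\<delta> - 1)) (vec (1 - \<delta>) :: real^3) \<subseteq> par_dom"
proof clarify
  fix t y assume "t \<in> {\<delta>..1}" "y \<in> cbox (vec (\<delta> - 1)) (vec (1 - \<delta>) :: real^3)"
  then have "\<delta> \<le> t" "t \<le> 1" "\<delta> - 1 \<le> y$j" "y$j \<le> 1 - \<delta>" for j
    by (auto simp: mem_box_cart)
  with assms show "(t, y) \<in> par_dom"
    by (simp add: par_dom_iff) (smt (verit))
qed

lemma exists_interior_max_above_barrier:
  assumes cont: "continuous_on ({0..1} \<times> closed_cube) (\<lambda>(t, x). u t x)" and "0 \<le> b"
    and "(t1, x1) \<in> par_dom" "barrier b t1 x1 < u t1 x1"
  obtains t0 x0 where "(t0, x0) \<in> par_dom" "barrier b t0 x0 < u t0 x0"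
    "\<And>t x. (t, x) \<in> par_dom \<Longrightarrow> u t x - barrier b t x \<le> u t0 x0 - barrier b t0 x0"
proof -
  define w where "w p = u (fst p) (snd p) - barrier b (fst p) (snd p)" for p
  have "compact ((\<lambda>(t, x). u t x) ` ({0..1} \<times> closed_cube))"
    by (auto intro!: compact_continuous_image cont compact_Times compact_closed_cube)
  then obtain M0 where M0: "\<forall>y\<in>(\<lambda>(t, x). u t x) ` ({0..1} \<times> closed_cube). \<bar>y\<bar> \<le> M0"
    by (meson bounded_real compact_imp_bounded)
  define M where "M = \<bar>M0\<bar> + 1"
  have u_less: "u t x < M" if "(t, x) \<in> par_dom" for t x
    using M0 par_dom_subset_closed that by (force simp: M_def)
  define \<delta> where "\<delta> = min (1/2) (min (4 / M^2) (2 / M))"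
  define K where "K = {\<delta>..1} \<times> cbox (vec (\<delta> - 1)) (vec (1 - \<delta>) :: real^3)"
  have "M > 0" "0 < \<delta>" "\<delta> \<le> 1/2" "\<delta> \<le> 4 / M^2" "\<delta> \<le> 2 / M"
    by (auto simp: M_def \<delta>_def)
  have outside: "w (t, x) < 0" if "(t, x) \<in> par_dom" "(t, x) \<notin> K" for t x
    using barrier_ge_off_compact[OF \<open>M > 0\<close> \<open>0 \<le> b\<close> \<open>\<delta> \<le> 4 / M^2\<close> \<open>\<delta> \<le> 2 / M\<close>
        that[unfolded K_def]] u_less[OF that(1)]
    by (simp add: w_def)
  have K_sub: "K \<subseteq> par_dom"
    unfolding K_def using \<open>0 < \<delta>\<close> by (rule inner_box_subset_par_dom)
  have "compact K"
    by (simp add: K_def compact_Times)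
  moreover have "(1, 0) \<in> K"
    using \<open>\<delta> \<le> 1/2\<close> by (simp add: K_def mem_box_cart)
  moreover have "continuous_on K w"
  proof -
    have "continuous_on K (\<lambda>p. u (fst p) (snd p))"
      using continuous_on_subset[OF cont] K_sub par_dom_subset_closed by (simp add: case_prod_beta')
    moreover have "continuous_on K (\<lambda>p. barrier b (fst p) (snd p))"
      using continuous_on_subset[OF continuous_on_barrier K_sub] .
    ultimately show ?thesis
      unfolding w_def by (rule continuous_on_diff)
  qed
  ultimately obtain p0 where p0: "p0 \<in> K" "\<And>p. p \<in> K \<Longrightarrow> w p \<le> w p0"
    using continuous_attains_sup[of K w] by blast
  have "0 < w (t1, x1)"
    using assms(4) by (simp add: w_def)
  with outside assms(3) p0(2) have "0 < w p0"
    by (cases "(t1, x1) \<in> K") (force, fastforce)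
  have "w (t, x) \<le> w p0" if "(t, x) \<in> par_dom" for t x
    using outside[OF that] p0(2)[of "(t, x)"] \<open>0 < w p0\<close> by (cases "(t, x) \<in> K") auto
  with that[of "fst p0" "snd p0"] p0(1) K_sub \<open>0 < w p0\<close> show thesis
    by (auto simp: w_def)
qed

definition is_subsol ::
  "(real \<Rightarrow> real^3 \<Rightarrow> real) \<Rightarrow> (real \<Rightarrow> real^3 \<Rightarrow> real) \<Rightarrow>
   (real \<Rightarrow> real^3 \<Rightarrow> real^3) \<Rightarrow> (real \<Rightarrow> real^3 \<Rightarrow> real^3^3) \<Rightarrow> real \<Rightarrow> bool" where
  "is_subsol u ut Du D2u c \<longleftrightarrow>
     continuous_on ({0..1} \<times> closed_cube) (\<lambda>(t, x). u t x) \<and>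
     (\<forall>(t, x)\<in>par_dom.
        ((\<lambda>s. u s x) has_real_derivative ut t x) (at t within {0<..1}) \<and>
        ((\<lambda>y. u t y) has_derivative (\<lambda>h. Du t x \<bullet> h)) (at x) \<and>
        ((\<lambda>y. Du t y) has_derivative (\<lambda>h. D2u t x *v h)) (at x) \<and>
        ut t x - trace (D2u t x) \<le> - (u t x ^ 3) + c)"

lemma is_sol_imp_is_subsol:
  assumes "is_sol u ut Du D2u g" "\<And>a t x. \<bar>g a t x\<bar> \<le> c"
  shows "is_subsol u ut Du D2u c"
  unfolding is_subsol_def
proof (intro conjI ballI; (clarify)?)
  show "continuous_on ({0..1} \<times> closed_cube) (\<lambda>(t, x). u t x)"
    using assms(1) unfolding is_sol_def by blast
next
  fix t x assume "(t, x) \<in> par_dom"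
  with assms(1) have "((\<lambda>s. u s x) has_real_derivative ut t x) (at t within {0<..1}) \<and>
      ((\<lambda>y. u t y) has_derivative (\<lambda>h. Du t x \<bullet> h)) (at x) \<and>
      ((\<lambda>y. Du t y) has_derivative (\<lambda>h. D2u t x *v h)) (at x) \<and>
      ut t x - trace (D2u t x) = - (u t x ^ 3) + g (u t x) t x"
    unfolding is_sol_def trace_def by fast
  moreover have "g (u t x) t x \<le> c"
    using assms(2)[of "u t x" t x] by linarith
  ultimately show "((\<lambda>s. u s x) has_real_derivative ut t x) (at t within {0<..1}) \<and>
      ((\<lambda>y. u t y) has_derivative (\<lambda>h. Du t x \<bullet> h)) (at x) \<and>
      ((\<lambda>y. Du t y) has_derivative (\<lambda>h. D2u t x *v h)) (at x) \<and>
      ut t x - trace (D2u t x) \<le> - (u t x ^ 3) + c"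
    by linarith
qed

lemma is_sol_imp_is_subsol_uminus:
  assumes "is_sol u ut Du D2u g" "\<And>a t x. \<bar>g a t x\<bar> \<le> c"
  shows "is_subsol (\<lambda>t x. - u t x) (\<lambda>t x. - ut t x) (\<lambda>t x. - Du t x) (\<lambda>t x. - D2u t x) c"
  unfolding is_subsol_def
proof (intro conjI ballI; (clarify)?)
  show "continuous_on ({0..1} \<times> closed_cube) (\<lambda>(t, x). - u t x)"
    using continuous_on_minus[OF conjunct1[OF assms(1)[unfolded is_sol_def]]]
    by (simp add: case_prod_beta')
next
  fix t x assume "(t, x) \<in> par_dom"
  with assms(1) have dt: "((\<lambda>s. u s x) has_real_derivative ut t x) (at t within {0<..1})"
    and dx: "((\<lambda>y. u t y) has_derivative (\<lambda>h. Du t x \<bullet> h)) (at x)"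
    and dxx: "((\<lambda>y. Du t y) has_derivative (\<lambda>h. D2u t x *v h)) (at x)"
    and eq: "ut t x - (\<Sum>i\<in>UNIV. D2u t x $ i $ i) = - (u t x ^ 3) + g (u t x) t x"
    unfolding is_sol_def by fast+
  have "- g (u t x) t x \<le> c"
    using assms(2)[of "u t x" t x] by linarith
  with eq have "- ut t x - trace (- D2u t x) \<le> - ((- u t x) ^ 3) + c"
    by (simp add: trace_def sum_negf)
  moreover have "((\<lambda>y. - u t y) has_derivative (\<lambda>h. - Du t x \<bullet> h)) (at x)"
    using has_derivative_minus[OF dx] by simp
  moreover have "((\<lambda>y. - Du t y) has_derivative (\<lambda>h. - D2u t x *v h)) (at x)"
    using has_derivative_minus[OF dxx] matrix_vector_mult_diff_rdistrib[of 0 "D2u t x"] by simp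
  ultimately show "((\<lambda>s. - u s x) has_real_derivative - ut t x) (at t within {0<..1}) \<and>
      ((\<lambda>y. - u t y) has_derivative (\<lambda>h. - Du t x \<bullet> h)) (at x) \<and>
      ((\<lambda>y. - Du t y) has_derivative (\<lambda>h. - D2u t x *v h)) (at x) \<and>
      - ut t x - trace (- D2u t x) \<le> - ((- u t x) ^ 3) + c"
    using DERIV_minus[OF dt] by blast
qed

lemma is_subsol_le_barrier:
  assumes sub: "is_subsol u ut Du D2u (b ^ 3)" and "0 \<le> b" and "(t, x) \<in> par_dom"
  shows "u t x \<le> barrier b t x"
proof (rule ccontr)
  have cont: "continuous_on ({0..1} \<times> closed_cube) (\<lambda>(t, x). u t x)"
    using sub unfolding is_subsol_def by blast
  have dt: "((\<lambda>s. u s x) has_real_derivative ut t x) (at t within {0<..1})"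
    and dx: "((\<lambda>y. u t y) has_derivative (\<lambda>h. Du t x \<bullet> h)) (at x)"
    and dxx: "((\<lambda>y. Du t y) has_derivative (\<lambda>h. D2u t x *v h)) (at x)"
    and ineq: "ut t x - trace (D2u t x) \<le> - (u t x ^ 3) + b ^ 3"
    if "(t, x) \<in> par_dom" for t x
    using sub that unfolding is_subsol_def by blast+
  assume "\<not> u t x \<le> barrier b t x"
  then have "barrier b t x < u t x" by simp
  then obtain t0 x0 where p0: "(t0, x0) \<in> par_dom" and above: "barrier b t0 x0 < u t0 x0"
    and max: "\<And>t x. (t, x) \<in> par_dom \<Longrightarrow> u t x - barrier b t x \<le> u t0 x0 - barrier b t0 x0"
    using exists_interior_max_above_barrier[OF cont \<open>0 \<le> b\<close> \<open>(t, x) \<in> par_dom\<close>] by blast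
  have x0: "x0 \<in> open_cube" and slice: "(t0, y) \<in> par_dom \<longleftrightarrow> y \<in> open_cube" for y
    using p0 by (auto simp: par_dom_def)
  have "- 1 / (t0 * sqrt t0) \<le> ut t0 x0"
    using p0 dt[OF p0] max by (rule time_derivative_ge_at_max)
  moreover have "D2u t0 x0 $ i $ i \<le> wall'' (x0$i)" for i
  proof (rule hessian_diag_le_wall''_at_max[OF x0 _ dxx[OF p0]])
    show "((\<lambda>y. u t0 y) has_derivative (\<lambda>h. Du t0 y \<bullet> h)) (at y)" if "y \<in> open_cube" for y
      using dx that slice by blast
    show "u t0 y - (\<Sum>j\<in>UNIV. wall (y$j)) \<le> u t0 x0 - (\<Sum>j\<in>UNIV. wall (x0$j))"
      if "y \<in> open_cube" for y
      using max[of t0 y] that slice by (simp add: barrier_def)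
  qed
  then have "trace (D2u t0 x0) \<le> (\<Sum>i\<in>UNIV. wall'' (x0$i))"
    unfolding trace_def by (rule sum_mono)
  ultimately have "u t0 x0 ^ 3 \<le> barrier b t0 x0 ^ 3"
    using ineq[OF p0] barrier_supersolution[OF p0 \<open>0 \<le> b\<close>] by linarith
  moreover have "barrier b t0 x0 ^ 3 < u t0 x0 ^ 3"
    using above barrier_ge(4)[OF p0 \<open>0 \<le> b\<close>] by (intro power_strict_mono) auto
  ultimately show False by simp
qed

lemma pdist_bounds:
  assumes "(t, x) \<in> par_dom"
  shows "0 < pdist t x" "pdist t x \<le> sqrt t" "pdist t x \<le> 1 - x$j" "pdist t x \<le> 1 + x$j"
proof -
  let ?S = "insert (sqrt t) ((\<lambda>i. 1 - x$i) ` UNIV \<union> (\<lambda>i. 1 + x$i) ` UNIV)"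
  have x: "0 < t" "-1 < x$i" "x$i < 1" for i
    using assms by (auto simp: par_dom_iff)
  have "0 < 1 - x$i" "0 < 1 + x$i" for i
    using x(2,3)[of i] by simp_all
  with x(1) have "\<forall>y\<in>?S. 0 < y"
    by auto
  moreover have "pdist t x \<in> ?S"
    unfolding pdist_def by (rule Min_in) simp_all
  ultimately show "0 < pdist t x" by blast
  show "pdist t x \<le> sqrt t" "pdist t x \<le> 1 - x$j" "pdist t x \<le> 1 + x$j"
    unfolding pdist_def by (rule Min_le; simp)+
qed

lemma barrier_le_pdist:
  assumes "(t, x) \<in> par_dom" "0 \<le> b"
  shows "barrier b t x \<le> 15 * max (1 / pdist t x) b"
proof -
  define d where "d = pdist t x"
  note d = pdist_bounds[OF assms(1), folded d_def]
  have "0 < t"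
    using assms(1) by (simp add: par_dom_iff)
  have "2 / sqrt t \<le> 2 / d"
    using d(1,2) \<open>0 < t\<close> by (intro divide_left_mono) (auto intro!: mult_pos_pos)
  moreover have "wall (x$j) \<le> 4 / d" for j
  proof -
    have "2 / (1 - x$j) \<le> 2 / d" "2 / (1 + x$j) \<le> 2 / d"
      using d(1) d(3,4)[of j] by (auto intro!: divide_left_mono)
    then show ?thesis by (simp add: wall_def)
  qed
  then have "(\<Sum>j\<in>UNIV. wall (x$j)) \<le> 12 / d"
    using sum_bounded_above[of UNIV "\<lambda>j. wall (x$j)" "4 / d"] by simp
  ultimately have "barrier b t x \<le> 14 * (1 / d) + b"
    by (simp add: barrier_def)
  then show ?thesis
    unfolding d_def by (smt (verit) max.cobounded1 max.cobounded2)
qed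

lemma abs_le_gnorm:
  assumes "g_bounded g"
  shows "\<bar>g a t x\<bar> \<le> gnorm g"
proof -
  obtain M where "\<forall>a t x. \<bar>g a t x\<bar> \<le> M"
    using assms unfolding g_bounded_def by blast
  then have "bdd_above (range (\<lambda>p. \<bar>g (fst p) (fst (snd p)) (snd (snd p))\<bar>))"
    by (auto intro!: bdd_aboveI)
  from cSUP_upper[OF _ this, of "(a, t, x)"] show ?thesis
    by (simp add: gnorm_def)
qed

lemma powr_one_third_cube:
  fixes G :: real
  assumes "0 \<le> G"
  shows "(G powr (1/3)) ^ 3 = G"
proof (cases "G = 0")
  case False
  with assms have "(G powr (1/3)) ^ 3 = (G powr (1/3)) powr (real 3)"
    by (simp add: powr_realpow)
  also have "\<dots> = G"
    using assms by (simp add: powr_powr)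
  finally show ?thesis .
qed simp

theorem lemma2p7:
  shows "\<exists>C::real. \<forall>u ut Du D2u g.
     is_sol u ut Du D2u g \<and> g_bounded g \<longrightarrow>
     (\<forall>t x. (t, x) \<in> par_dom \<longrightarrow>
        \<bar>u t x\<bar> \<le> C * max (1 / pdist t x) (gnorm g powr (1/3)))"
proof (intro exI[of _ 15] allI impI, elim conjE)
  fix u ut Du D2u g t x
  assume sol: "is_sol u ut Du D2u g" and "g_bounded g" and "(t, x) \<in> par_dom"
  define b where "b = gnorm g powr (1/3)"
  have "0 \<le> gnorm g"
    using abs_le_gnorm[OF \<open>g_bounded g\<close>] abs_ge_zero order_trans by blast
  then have g_le: "\<bar>g a s y\<bar> \<le> b ^ 3" for a s y
    using abs_le_gnorm[OF \<open>g_bounded g\<close>] by (simp add: b_def powr_one_third_cube)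
  have "0 \<le> b"
    by (simp add: b_def)
  have "\<bar>u t x\<bar> \<le> barrier b t x"
    using is_subsol_le_barrier[OF is_sol_imp_is_subsol[OF sol g_le] \<open>0 \<le> b\<close> \<open>(t, x) \<in> par_dom\<close>]
      is_subsol_le_barrier[OF is_sol_imp_is_subsol_uminus[OF sol g_le] \<open>0 \<le> b\<close> \<open>(t, x) \<in> par_dom\<close>]
    by simp
  also have "barrier b t x \<le> 15 * max (1 / pdist t x) b"
    by (rule barrier_le_pdist[OF \<open>(t, x) \<in> par_dom\<close> \<open>0 \<le> b\<close>])
  finally show "\<bar>u t x\<bar> \<le> 15 * max (1 / pdist t x) (gnorm g powr (1/3))"
    unfolding b_def by simp
qed

end
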